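(* For every real $\theta>1$, the set $\mathcal A_\theta$ has density $0$, i.e. $\lim_{N\to\infty}\frac{|\mathcal A_\theta\cap[1,N]|}{N}=0$.
   Context: $\lfloor x\rfloor$ is the floor of $x$; $\log$ is the natural logarithm. For real $\theta>1$ and positive integer $n$, $M'_\theta(n)=\left\lfloor 1/(\theta^{1/n}-1)\right\rfloor$, and $\mathcal A_\theta=\{n\in\mathbb N: M'_\theta(n)\neq \lfloor n/\log\theta-1/2\rfloor\}$, where $\mathbb N$ is the set of positive integers. *)

theory Defs
  imports Complex_Main
begin

definition M' :: "real \<Rightarrow> nat \<Rightarrow> int" where
  "M' \<theta> n = \<lfloor>1 / (\<theta> powr (1 / real n) - 1)\<rfloor>"

definition A_set :: "real \<Rightarrow> nat set" where
  "A_set \<theta> = {n. n \<ge> 1 \<and> M' \<theta> n \<noteq> \<lfloor>real n / ln \<theta> - 1/2\<rfloor>}"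

end

theory Submission imports Defs begin

(*
  Write L = ln \<theta> and u n = n / L - 1/2.  Since \<theta> powr (1/n) = exp (L/n), the elementary
  bounds 1/x - 1/2 < 1/(exp x - 1) \<le> 1/x - 1/2 + x (for 0 < x < 2) show that for n > L
  the two floors in the definition of A_set can only differ when an integer lies in
  the short interval (u n, u n + L/n].  So every large n in A_set \<theta> has u n "just below
  an integer", at distance at most L/n (predicate near_above).

  The density statement then follows from a general fact about arithmetic progressions
  u n = n \<alpha> + \<beta>: a set S of indices n with u n within c/n below an integer is sparse.
   - If q \<alpha> \<in> \<int> for some q \<ge> 1, the distances 1 - frac (u n) take finitely many positive
     values, so S is finite.
   - Otherwise, for each D, the numbers d \<alpha> (1 \<le> d \<le> D) stay a fixed distance away from
     \<int>, which forces large elements of S to be at least D apart; hence at most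
     about N/D of them lie in [1, N].
  Finally, bounds card (S \<inter> {1..N}) \<le> C + N/D for every D give density zero.
*)

section \<open>Elementary bounds for 1/(exp x - 1)\<close>

text \<open>The Pade-type inequality (2 - x) e^x < 2 + x on (0,2): the function
  (2 - y) e^y - (2 + y) vanishes at 0 and is strictly decreasing, since its derivative
  is (1 - y) e^y - 1 < 0.\<close>
lemma exp_pade_lower:
  fixes x :: real assumes "0 < x" "x < 2"
  shows "(2 - x) * exp x < 2 + x"
proof -
  let ?f = "\<lambda>y::real. (2 - y) * exp y - (2 + y)"
  have "?f 0 > ?f x"
  proof (rule DERIV_neg_imp_decreasing_open[of 0 x])
    show "0 < x" by fact
    fix y :: real assume y: "0 < y" "y < x"
    have deriv: "DERIV ?f y :> ((-1) * exp y + (2 - y) * exp y - 1)"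
      by (auto intro!: derivative_eq_intros)
    have "1 - y < exp (-y)" using exp_minus_greater[of y] y by simp
    hence "(1 - y) * exp y < exp (-y) * exp y" by simp
    also have "\<dots> = 1" by (simp add: exp_minus field_simps)
    finally have "(-1) * exp y + (2 - y) * exp y - 1 < 0" by (simp add: algebra_simps)
    thus "\<exists>z. DERIV ?f y :> z \<and> z < 0" using deriv by blast
  next
    show "continuous_on {0..x} ?f" by (intro continuous_intros)
  qed
  thus ?thesis by simp
qed

text \<open>Two-sided estimate of 1/(e^x - 1) against its Laurent approximation 1/x - 1/2;
  the lower bound comes from the Pade inequality, the upper one from e^x \<ge> 1 + x + x^2/2.\<close>
lemma inv_exp_minus_one_bounds:
  fixes x :: real assumes "0 < x" "x < 2"
  shows "1/x - 1/2 < 1/(exp x - 1)" "1/(exp x - 1) \<le> 1/x - 1/2 + x"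
proof -
  have pos: "exp x - 1 > 0" using assms by simp
  have "(2 - x) * (exp x - 1) < 2 * x"
    using exp_pade_lower[OF assms] by (simp add: algebra_simps)
  hence "(2 - x) / (2 * x) < 1 / (exp x - 1)" using pos assms by (simp add: field_simps)
  moreover have "(2 - x) / (2 * x) = 1/x - 1/2" using assms by (simp add: field_simps)
  ultimately show "1/x - 1/2 < 1/(exp x - 1)" by simp
  have taylor: "1 + x + x^2/2 \<le> exp x" using exp_lower_Taylor_quadratic[of x] assms by simp
  have quad_pos: "x + x^2/2 > 0" using assms by (simp add: add_pos_nonneg)
  have "1/(exp x - 1) \<le> 1/(x + x^2/2)" using taylor quad_pos by (intro frac_le) auto
  also have "\<dots> \<le> 1/x - 1/2 + x"
  proof -
    have "(1/x - 1/2 + x) * (x + x^2/2) = 1 + 3*x^2/4 + x^3/2"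
      using assms by (simp add: field_simps power2_eq_square power3_eq_cube)
    moreover have "x^3/2 \<ge> 0" "3*x^2/4 \<ge> 0" using assms by simp_all
    ultimately have "1 \<le> (1/x - 1/2 + x) * (x + x^2/2)" by linarith
    thus ?thesis using quad_pos by (simp add: divide_le_eq)
  qed
  finally show "1/(exp x - 1) \<le> 1/x - 1/2 + x" .
qed

section \<open>Reals lying just below an integer\<close>

definition near_above :: "real \<Rightarrow> real \<Rightarrow> bool" where
  "near_above \<epsilon> u \<longleftrightarrow> (\<exists>k::int. 0 < real_of_int k - u \<and> real_of_int k - u \<le> \<epsilon>)"

lemma near_above_if_floor_jumps:
  fixes u v \<epsilon> :: real
  assumes "u < v" "v \<le> u + \<epsilon>" "\<lfloor>u\<rfloor> \<noteq> \<lfloor>v\<rfloor>"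
  shows "near_above \<epsilon> u"
proof -
  have "\<lfloor>u\<rfloor> \<le> \<lfloor>v\<rfloor>" using assms by (intro floor_mono) simp
  with assms have "\<lfloor>u\<rfloor> + 1 \<le> \<lfloor>v\<rfloor>" by simp
  hence "u < real_of_int \<lfloor>v\<rfloor>" using real_of_int_floor_add_one_gt[of u] by linarith
  moreover have "real_of_int \<lfloor>v\<rfloor> \<le> v" by simp
  ultimately show ?thesis using assms unfolding near_above_def by (intro exI[of _ "\<lfloor>v\<rfloor>"]) linarith
qed

text \<open>The nearest integer above u is \<lfloor>u\<rfloor> + 1, so the distance is at least 1 - frac u.\<close>
lemma near_above_frac:
  assumes "near_above \<epsilon> u"
  shows "1 - frac u \<le> \<epsilon>"
proof -
  obtain k :: int where k: "0 < real_of_int k - u" "real_of_int k - u \<le> \<epsilon>"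
    using assms unfolding near_above_def by blast
  have "\<lfloor>u\<rfloor> < k" using k(1) by (simp add: floor_less_iff)
  hence "real_of_int \<lfloor>u\<rfloor> + 1 \<le> real_of_int k" by linarith
  thus ?thesis using k(2) unfolding frac_def by linarith
qed

lemma near_above_diff:
  assumes "near_above \<epsilon>1 u1" "near_above \<epsilon>2 u2"
  shows "\<exists>m::int. \<bar>u2 - u1 - real_of_int m\<bar> < max \<epsilon>1 \<epsilon>2"
proof -
  obtain k1 :: int where k1: "0 < real_of_int k1 - u1" "real_of_int k1 - u1 \<le> \<epsilon>1"
    using assms(1) unfolding near_above_def by blast
  obtain k2 :: int where k2: "0 < real_of_int k2 - u2" "real_of_int k2 - u2 \<le> \<epsilon>2"
    using assms(2) unfolding near_above_def by blast
  have "\<bar>u2 - u1 - real_of_int (k2 - k1)\<bar> < max \<epsilon>1 \<epsilon>2"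
    using k1 k2 by (simp add: abs_less_iff max_def)
  thus ?thesis by blast
qed

lemma A_set_near_above:
  assumes th: "\<theta> > 1" and nA: "n \<in> A_set \<theta>" and nL: "real n > ln \<theta>"
  shows "near_above (ln \<theta> / real n) (real n / ln \<theta> - 1/2)"
proof -
  define x where "x = ln \<theta> / real n"
  have "ln \<theta> > 0" using th by simp
  hence x: "0 < x" "x < 1" using nL by (simp_all add: x_def)
  have "\<theta> powr (1 / real n) = exp x" using th by (simp add: powr_def x_def)
  moreover have "1 / x = real n / ln \<theta>" by (simp add: x_def)
  ultimately show ?thesis
    using inv_exp_minus_one_bounds[of x] x nA
    by (intro near_above_if_floor_jumps[where v = "1 / (\<theta> powr (1 / real n) - 1)"])
       (auto simp: A_set_def M'_def x_def)
qed

section \<open>Sparseness of indices where a progression is near an integer\<close>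

lemma finite_nonints_dist_pos:
  fixes X :: "real set"
  assumes "finite X" "X \<inter> \<int> = {}"
  shows "\<exists>\<eta>>0. \<forall>x\<in>X. \<forall>k::int. \<eta> \<le> \<bar>x - real_of_int k\<bar>"
proof -
  define g where "g x = min (frac x) (1 - frac x)" for x :: real
  have g_le: "g x \<le> \<bar>x - real_of_int k\<bar>" for x and k :: int
  proof (cases "k \<le> \<lfloor>x\<rfloor>")
    case True
    hence "real_of_int k \<le> real_of_int \<lfloor>x\<rfloor>" by (simp only: of_int_le_iff)
    thus ?thesis unfolding g_def frac_def by linarith
  next
    case False
    hence "real_of_int (\<lfloor>x\<rfloor> + 1) \<le> real_of_int k" by (simp only: of_int_le_iff)
    thus ?thesis unfolding g_def frac_def by simp
  qed
  define \<eta> where "\<eta> = Min (insert 1 (g ` X))"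
  have "\<eta> > 0"
    using assms frac_lt_1 unfolding \<eta>_def g_def by (auto simp: Min_gr_iff)
  moreover have "\<eta> \<le> \<bar>x - real_of_int k\<bar>" if "x \<in> X" for x k
    using that assms(1) g_le[of x k] unfolding \<eta>_def by (meson Min_le finite_imageI finite_insert
        image_eqI insertI2 order_trans)
  ultimately show ?thesis by blast
qed

text \<open>Rational case: if q \<alpha> is an integer, n \<alpha> + \<beta> has only finitely many fractional parts,
  so its distance to the next integer is bounded below and cannot be \<le> c/n for large n.\<close>
lemma near_above_set_finite_rational:
  fixes \<alpha> \<beta> c :: real and S :: "nat set"
  assumes q: "q \<ge> 1" "real q * \<alpha> \<in> \<int>"
    and near: "\<forall>n\<in>S. n \<ge> M \<longrightarrow> near_above (c / real n) (real n * \<alpha> + \<beta>)"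
  shows "finite S"
proof -
  define gap where "gap n = 1 - frac (real n * \<alpha> + \<beta>)" for n :: nat
  define \<tau> where "\<tau> = Min (gap ` {..<q})"
  have "{..<q} \<noteq> {}" using q(1) by (simp add: lessThan_empty_iff)
  hence \<tau>_pos: "\<tau> > 0"
    unfolding \<tau>_def gap_def by (subst Min_gr_iff) (auto simp: frac_lt_1 less_diff_eq)
  have periodic: "gap n = gap (n mod q)" for n
  proof -
    have "real n = real (n mod q) + real (n div q) * real q"
      by (metis mod_div_mult_eq of_nat_add of_nat_mult)
    hence "real n * \<alpha> + \<beta> = (real (n mod q) * \<alpha> + \<beta>) + real (n div q) * (real q * \<alpha>)"
      by (simp add: algebra_simps)
    moreover have "real (n div q) * (real q * \<alpha>) \<in> \<int>" using q(2) by simp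
    ultimately show ?thesis unfolding gap_def by (simp only: frac_add_int_right)
  qed
  have gap_ge: "\<tau> \<le> gap n" for n
    using q unfolding periodic[of n] \<tau>_def by (intro Min_le) auto
  have "S \<subseteq> {..max M (nat \<lceil>c / \<tau>\<rceil>)}"
  proof
    fix n assume n: "n \<in> S"
    show "n \<in> {..max M (nat \<lceil>c / \<tau>\<rceil>)}"
    proof (cases "n \<ge> M")
      case True
      hence "\<tau> \<le> c / real n"
        using near n near_above_frac gap_ge[of n] unfolding gap_def by (meson order_trans)
      with \<tau>_pos have n_pos: "real n > 0" by (cases "n = 0") auto
      with \<open>\<tau> \<le> c / real n\<close> \<tau>_pos have "real n \<le> c / \<tau>"
        by (simp add: field_simps)
      hence "n \<le> nat \<lceil>c / \<tau>\<rceil>" by linarith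
      thus ?thesis by simp
    qed simp
  qed
  thus ?thesis using finite_subset by blast
qed

text \<open>Irrational case: if none of d \<alpha> (1 \<le> d \<le> D) is an integer, they stay some \<eta> > 0
  away from \<int>.  Two large indices n1 < n2 of S have (n2 - n1) \<alpha> within max (c/n1) (c/n2) of an
  integer, which is < \<eta> once n1 is large; hence n2 - n1 > D.\<close>
lemma near_above_set_spaced:
  fixes \<alpha> \<beta> c :: real and S :: "nat set"
  assumes nonint: "\<forall>d\<in>{1..D}. real d * \<alpha> \<notin> \<int>"
    and near: "\<forall>n\<in>S. n \<ge> M \<longrightarrow> near_above (c / real n) (real n * \<alpha> + \<beta>)"
  shows "\<exists>N0. \<forall>n1\<in>S. \<forall>n2\<in>S. N0 \<le> n1 \<longrightarrow> n1 < n2 \<longrightarrow> n1 + D \<le> n2"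
proof -
  obtain \<eta> where \<eta>: "\<eta> > 0"
    and dist: "\<And>d k. d \<in> {1..D} \<Longrightarrow> \<eta> \<le> \<bar>real d * \<alpha> - real_of_int k\<bar>"
    using finite_nonints_dist_pos[of "(\<lambda>d. real d * \<alpha>) ` {1..D}"] nonint by blast
  define N0 where "N0 = max M (nat \<lceil>c / \<eta>\<rceil> + 1)"
  have small: "c / real n < \<eta>" if "n \<ge> N0" for n
  proof -
    have "real n > c / \<eta>" using that unfolding N0_def by linarith
    moreover have "real n > 0" using that unfolding N0_def by simp
    ultimately show ?thesis using \<eta> by (simp add: field_simps)
  qed
  have "n1 + D \<le> n2" if n: "n1 \<in> S" "n2 \<in> S" "N0 \<le> n1" "n1 < n2" for n1 n2
  proof (rule ccontr)
    assume "\<not> n1 + D \<le> n2"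
    hence d: "n2 - n1 \<in> {1..D}" using n(4) by auto
    have "N0 \<le> n2" "M \<le> n1" "M \<le> n2" using n unfolding N0_def by auto
    then obtain m :: int where
      m: "\<bar>(real n2 * \<alpha> + \<beta>) - (real n1 * \<alpha> + \<beta>) - real_of_int m\<bar> < max (c / real n1) (c / real n2)"
      using near_above_diff near n by meson
    have "real (n2 - n1) * \<alpha> = (real n2 * \<alpha> + \<beta>) - (real n1 * \<alpha> + \<beta>)"
      using n(4) by (simp add: of_nat_diff algebra_simps)
    hence "\<bar>real (n2 - n1) * \<alpha> - real_of_int m\<bar> < \<eta>"
      using m small[OF n(3)] small[OF \<open>N0 \<le> n2\<close>] by simp
    thus False using dist[OF d, of m] by linarith
  qed
  thus ?thesis by blast
qed

text \<open>A set whose elements beyond N0 are pairwise at least D apart has at most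
  N0 + 1 + N/D elements in [1, N]: beyond N0, n \<mapsto> n div D is injective.\<close>
lemma card_spaced_set:
  fixes S :: "nat set"
  assumes D: "D \<ge> 1"
    and spaced: "\<forall>n1\<in>S. \<forall>n2\<in>S. N0 \<le> n1 \<longrightarrow> n1 < n2 \<longrightarrow> n1 + D \<le> n2"
  shows "real (card (S \<inter> {1..N})) \<le> real N0 + 1 + real N / real D"
proof -
  define T where "T = S \<inter> {N0..N}"
  have "S \<inter> {1..N} \<subseteq> {..<N0} \<union> T" by (auto simp: T_def)
  hence "card (S \<inter> {1..N}) \<le> card ({..<N0} \<union> T)"
    by (intro card_mono) (simp_all add: T_def)
  also have "\<dots> \<le> N0 + card T" using card_Un_le[of "{..<N0}" T] by simp
  finally have split: "card (S \<inter> {1..N}) \<le> N0 + card T" .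
  have div_less: "n1 div D < n2 div D" if "n1 \<in> T" "n2 \<in> T" "n1 < n2" for n1 n2
  proof -
    have "n1 + D \<le> n2" using spaced that by (auto simp: T_def)
    hence "(n1 + D) div D \<le> n2 div D" by (rule div_le_mono)
    thus ?thesis using D by simp
  qed
  have "inj_on (\<lambda>n. n div D) T"
    by (intro inj_onI) (metis div_less less_irrefl linorder_neqE_nat)
  moreover have "(\<lambda>n. n div D) ` T \<subseteq> {..N div D}" by (auto simp: T_def intro: div_le_mono)
  ultimately have "card T \<le> N div D + 1"
    using card_mono[of "{..N div D}" "(\<lambda>n. n div D) ` T"] card_image by fastforce
  with split have "real (card (S \<inter> {1..N})) \<le> real N0 + real (N div D) + 1" by linarith
  also have "real (N div D) \<le> real N / real D" by (rule of_nat_div_le_of_nat)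
  finally show ?thesis by simp
qed

lemma near_above_set_sparse:
  fixes \<alpha> \<beta> c :: real and S :: "nat set"
  assumes near: "\<forall>n\<in>S. n \<ge> M \<longrightarrow> near_above (c / real n) (real n * \<alpha> + \<beta>)"
    and D: "D \<ge> 1"
  shows "\<exists>C. \<forall>N. real (card (S \<inter> {1..N})) \<le> C + real N / real D"
proof (cases "\<exists>q\<ge>1. real q * \<alpha> \<in> \<int>")
  case True
  then obtain q where "q \<ge> 1" "real q * \<alpha> \<in> \<int>" by blast
  hence "finite S" using near_above_set_finite_rational near by blast
  hence "card (S \<inter> {1..N}) \<le> card S" for N by (intro card_mono) auto
  hence "real (card (S \<inter> {1..N})) \<le> real (card S) + real N / real D" for N
    by (smt (verit) of_nat_0_le_iff of_nat_le_iff divide_nonneg_nonneg)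
  thus ?thesis by blast
next
  case False
  hence "\<forall>d\<in>{1..D}. real d * \<alpha> \<notin> \<int>" by auto
  then obtain N0 where "\<forall>n1\<in>S. \<forall>n2\<in>S. N0 \<le> n1 \<longrightarrow> n1 < n2 \<longrightarrow> n1 + D \<le> n2"
    using near_above_set_spaced near by blast
  thus ?thesis using card_spaced_set[OF D] by blast
qed

lemma density_zero_from_bounds:
  fixes f :: "nat \<Rightarrow> real"
  assumes nonneg: "\<And>N. f N \<ge> 0"
    and bound: "\<And>D::nat. D \<ge> 1 \<Longrightarrow> \<exists>C. \<forall>N. f N \<le> C + real N / real D"
  shows "(\<lambda>N. f N / real N) \<longlonglongrightarrow> 0"
proof (rule LIMSEQ_I)
  fix r :: real assume r: "0 < r"
  define D where "D = nat \<lceil>2 / r\<rceil> + 1"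
  have D1: "D \<ge> 1" by (simp add: D_def)
  have "real D > 2 / r" unfolding D_def by linarith
  hence Dr: "1 / real D < r / 2" using r D1 by (simp add: field_simps)
  obtain C where C: "\<And>N. f N \<le> C + real N / real D" using bound[OF D1] by blast
  define N0 where "N0 = nat \<lceil>2 * \<bar>C\<bar> / r\<rceil> + 1"
  have "norm (f n / real n - 0) < r" if n: "n \<ge> N0" for n
  proof -
    have n_pos: "real n > 0" using n by (simp add: N0_def)
    have "real n > 2 * \<bar>C\<bar> / r" using n unfolding N0_def by linarith
    hence nC: "\<bar>C\<bar> / real n < r / 2" using r n_pos by (simp add: field_simps)
    have "f n / real n \<le> (C + real n / real D) / real n"
      using C n_pos by (simp add: divide_right_mono)
    also have "\<dots> = C / real n + 1 / real D" using n_pos by (simp add: field_simps)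
    also have "\<dots> < r"
      using nC Dr divide_right_mono[of C "\<bar>C\<bar>" "real n"] n_pos by linarith
    finally show ?thesis using nonneg[of n] n_pos by simp
  qed
  thus "\<exists>no. \<forall>n\<ge>no. norm (f n / real n - 0) < r" by blast
qed

theorem theorem3:
  fixes \<theta> :: real
  assumes "\<theta> > 1"
  shows "(\<lambda>N. real (card (A_set \<theta> \<inter> {1..N})) / real N) \<longlonglongrightarrow> 0"
proof (rule density_zero_from_bounds)
  fix D :: nat assume D: "D \<ge> 1"
  define M where "M = nat \<lfloor>ln \<theta>\<rfloor> + 1"
  have "near_above (ln \<theta> / real n) (real n * (1 / ln \<theta>) + (- 1/2))"
    if "n \<in> A_set \<theta>" "n \<ge> M" for n
  proof -
    have "real n > ln \<theta>" using that(2) unfolding M_def by linarith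
    thus ?thesis using A_set_near_above[OF assms that(1)] by simp
  qed
  thus "\<exists>C. \<forall>N. real (card (A_set \<theta> \<inter> {1..N})) \<le> C + real N / real D"
    using near_above_set_sparse[OF _ D] by blast
qed simp

end
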